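(* Let $G$ be a finite abelian group and let $f$ be an automorphism of the monoid $\mathcal{P}_{0}(G)$. Then $f$ maps every $2$-element set in $\mathcal{P}_{0}(G)$ to a $2$-element set.
   Context: For an additively written finite abelian group $G$, $\mathcal{P}_{0}(G)$ is the monoid of all subsets of $G$ containing $0$, with setwise addition $X+Y=\{x+y : x\in X, y\in Y\}$ and identity $\{0\}$. *)

theory Defs
  imports Main "HOL-Library.Set_Algebras"
begin

text \<open>Setwise addition X + Y = {x + y. x in X, y in Y} is the instance from Set_Algebras.\<close>

definition P0 :: "'a::zero set set" where
  "P0 = {X. 0 \<in> X}"

definition P0_automorphism :: "('a::{zero,plus} set \<Rightarrow> 'a set) \<Rightarrow> bool" where
  "P0_automorphism f \<longleftrightarrow>
     bij_betw f P0 P0 \<and>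
     (\<forall>X\<in>P0. \<forall>Y\<in>P0. f (X + Y) = f X + f Y) \<and>
     f {0} = {0}"

end

theory Submission
  imports Defs
begin

text \<open>For X containing 0 the iterated sumsets kX increase and, in a finite group, become
stationary at the first index s with sX + X = sX; then sX is idempotent. The divisors of an
idempotent H in P0(G) are exactly the 2^(|H| - 1) subsets of H containing 0, so an automorphism
f, which maps divisors of H onto divisors of f H, preserves the size of idempotents. It also
commutes with k-fold sums, hence f X has the same index s. For X = {0, a} we get
|f X| + (s - 1) \<le> |s f X| = |sX| \<le> s + 1, i.e. |f X| \<le> 2, and |f X| \<ge> 2 because f X \<noteq> {0}.\<close>

fun sumset_iter :: "nat \<Rightarrow> 'a::comm_monoid_add set \<Rightarrow> 'a set" where
  "sumset_iter 0 X = {0}"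
| "sumset_iter (Suc k) X = sumset_iter k X + X"

lemma zero_in_sumset_iter:
  fixes X :: "'a::comm_monoid_add set"
  assumes "0 \<in> X"
  shows "0 \<in> sumset_iter k X"
proof (induction k)
  case (Suc k)
  then have "0 + 0 \<in> sumset_iter k X + X" using assms by (intro set_plus_intro)
  then show ?case by simp
qed simp

lemma finite_sumset_iter: "finite X \<Longrightarrow> finite (sumset_iter k X)"
  by (induction k) (simp_all add: finite_set_plus)

lemma sumset_iter_subset_Suc:
  fixes X :: "'a::comm_monoid_add set"
  assumes "0 \<in> X"
  shows "sumset_iter k X \<subseteq> sumset_iter (Suc k) X"
  using set_zero_plus2[OF assms, of "sumset_iter k X"] by (simp add: add.commute)

lemma sumset_iter_plus_stable:
  fixes X :: "'a::comm_monoid_add set"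
  assumes "sumset_iter k X + X = sumset_iter k X"
  shows "sumset_iter k X + sumset_iter j X = sumset_iter k X"
proof (induction j)
  case (Suc j)
  have "sumset_iter k X + sumset_iter (Suc j) X = (sumset_iter k X + sumset_iter j X) + X"
    by (simp add: add.assoc)
  then show ?case using Suc assms by simp
qed simp

lemma card_sumset_iter_growth:
  fixes X :: "'a::comm_monoid_add set"
  assumes "finite X" "0 \<in> X"
    and not_stable: "\<forall>i<k. sumset_iter i X + X \<noteq> sumset_iter i X"
    and "j \<le> k"
  shows "card (sumset_iter j X) + (k - j) \<le> card (sumset_iter k X)"
  using \<open>j \<le> k\<close> not_stable
proof (induction k rule: dec_induct)
  case (step k)
  have "sumset_iter k X \<subset> sumset_iter (Suc k) X"
    using sumset_iter_subset_Suc[OF \<open>0 \<in> X\<close>] step.prems by auto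
  then have "card (sumset_iter k X) < card (sumset_iter (Suc k) X)"
    by (intro psubset_card_mono finite_sumset_iter \<open>finite X\<close>)
  then show ?case using step by simp
qed simp

lemma sumset_iter_stabilizes:
  fixes X :: "'a::{comm_monoid_add, finite} set"
  assumes "0 \<in> X"
  obtains s where "sumset_iter s X + X = sumset_iter s X"
    and "\<forall>i<s. sumset_iter i X + X \<noteq> sumset_iter i X"
proof -
  have "\<exists>k. sumset_iter k X + X = sumset_iter k X"
  proof (rule ccontr)
    assume "\<nexists>k. sumset_iter k X + X = sumset_iter k X"
    then have "card (sumset_iter 0 X) + card (UNIV :: 'a set) \<le> card (sumset_iter (card (UNIV :: 'a set)) X)"
      using card_sumset_iter_growth[OF _ assms] by fastforce
    moreover have "card (sumset_iter (card (UNIV :: 'a set)) X) \<le> card (UNIV :: 'a set)"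
      by (rule card_mono) simp_all
    ultimately show False by simp
  qed
  define s where "s = (LEAST k. sumset_iter k X + X = sumset_iter k X)"
  show ?thesis
  proof (rule that)
    show "sumset_iter s X + X = sumset_iter s X"
      unfolding s_def by (rule LeastI_ex) fact
    show "\<forall>i<s. sumset_iter i X + X \<noteq> sumset_iter i X"
      unfolding s_def using not_less_Least by blast
  qed
qed

lemma card_sumset_iter_pair_le:
  fixes a :: "'a::comm_monoid_add"
  shows "card (sumset_iter k {0, a}) \<le> Suc k"
proof -
  have "sumset_iter k {0, a} \<subseteq> (\<lambda>i. ((+) a ^^ i) 0) ` {..k}"
  proof (induction k)
    case (Suc k)
    show ?case
    proof
      fix x assume "x \<in> sumset_iter (Suc k) {0, a}"
      then obtain y i where "i \<le> k" "y = ((+) a ^^ i) 0" "x = y \<or> x = y + a"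
        using Suc.IH by (auto simp: set_plus_def)
      then have "x = ((+) a ^^ i) 0 \<or> x = ((+) a ^^ Suc i) 0"
        by (auto simp: add.commute)
      then show "x \<in> (\<lambda>i. ((+) a ^^ i) 0) ` {..Suc k}"
        using \<open>i \<le> k\<close> by (auto intro: rev_image_eqI)
    qed
  qed simp
  then show ?thesis
    by (metis card_atMost card_image_le card_mono finite_atMost finite_imageI le_trans)
qed

definition P0_divisors :: "'a::{zero, plus} set \<Rightarrow> 'a set set" where
  "P0_divisors H = {Y \<in> P0. \<exists>Z\<in>P0. Y + Z = H}"

lemma P0_divisors_idempotent:
  fixes H :: "'a::comm_monoid_add set"
  assumes "0 \<in> H" "H + H = H"
  shows "P0_divisors H = {Y. 0 \<in> Y \<and> Y \<subseteq> H}"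
proof (intro set_eqI iffI)
  fix Y assume "Y \<in> P0_divisors H"
  then obtain Z where "0 \<in> Y" "0 \<in> Z" "Y + Z = H" by (auto simp: P0_divisors_def P0_def)
  then show "Y \<in> {Y. 0 \<in> Y \<and> Y \<subseteq> H}"
    using set_zero_plus2[of Z Y] by (auto simp: add.commute)
next
  fix Y assume Y: "Y \<in> {Y. 0 \<in> Y \<and> Y \<subseteq> H}"
  have "Y + H \<subseteq> H + H" using Y by (intro set_plus_mono2) auto
  moreover have "H \<subseteq> Y + H" using Y set_zero_plus2 by auto
  ultimately have "Y + H = H" using assms by auto
  then show "Y \<in> P0_divisors H" using Y assms by (auto simp: P0_divisors_def P0_def)
qed

lemma card_subsets_containing_zero:
  fixes H :: "'a::zero set"
  assumes "finite H" "0 \<in> H"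
  shows "card {Y. 0 \<in> Y \<and> Y \<subseteq> H} = 2 ^ (card H - 1)"
proof -
  have "bij_betw (\<lambda>Y. Y - {0}) {Y. 0 \<in> Y \<and> Y \<subseteq> H} (Pow (H - {0}))"
    by (rule bij_betw_byWitness[where f'="insert 0"]) (auto simp: assms)
  then have "card {Y. 0 \<in> Y \<and> Y \<subseteq> H} = card (Pow (H - {0}))" by (rule bij_betw_same_card)
  also have "\<dots> = 2 ^ (card H - 1)" using assms by (simp add: card_Pow)
  finally show ?thesis .
qed

lemma P0_plus:
  fixes X :: "'a::comm_monoid_add set"
  assumes "X \<in> P0" "Y \<in> P0"
  shows "X + Y \<in> P0"
  using assms set_plus_intro[of 0 X 0 Y] by (simp add: P0_def)

lemma sumset_iter_in_P0: "X \<in> P0 \<Longrightarrow> sumset_iter k X \<in> P0"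
  by (simp add: P0_def zero_in_sumset_iter)

context
  fixes f :: "'a::comm_monoid_add set \<Rightarrow> 'a set"
  assumes f: "P0_automorphism f"
begin

lemma P0_automorphism_in_P0: "X \<in> P0 \<Longrightarrow> f X \<in> P0"
  using f by (auto simp: P0_automorphism_def bij_betw_def)

lemma P0_automorphism_eq_iff: "X \<in> P0 \<Longrightarrow> Y \<in> P0 \<Longrightarrow> f X = f Y \<longleftrightarrow> X = Y"
  using f by (auto simp: P0_automorphism_def bij_betw_def dest: inj_onD)

lemma P0_automorphism_plus: "X \<in> P0 \<Longrightarrow> Y \<in> P0 \<Longrightarrow> f (X + Y) = f X + f Y"
  using f by (simp add: P0_automorphism_def)

lemma P0_automorphism_zero: "f {0} = {0}"
  using f by (simp add: P0_automorphism_def)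

lemma P0_automorphism_sumset_iter:
  assumes "X \<in> P0"
  shows "f (sumset_iter k X) = sumset_iter k (f X)"
  by (induction k) (simp_all add: P0_automorphism_zero P0_automorphism_plus sumset_iter_in_P0 assms)

lemma P0_automorphism_sumset_iter_stable_iff:
  assumes "X \<in> P0"
  shows "sumset_iter k X + X = sumset_iter k X \<longleftrightarrow> sumset_iter k (f X) + f X = sumset_iter k (f X)"
proof -
  have "sumset_iter k X + X \<in> P0" using sumset_iter_in_P0[OF assms, of "Suc k"] by simp
  then have "sumset_iter k X + X = sumset_iter k X \<longleftrightarrow> f (sumset_iter k X + X) = f (sumset_iter k X)"
    by (simp add: P0_automorphism_eq_iff sumset_iter_in_P0 assms)
  then show ?thesis
    by (simp add: P0_automorphism_plus P0_automorphism_sumset_iter sumset_iter_in_P0 assms)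
qed

lemma P0_automorphism_image_divisors:
  assumes "H \<in> P0"
  shows "f ` P0_divisors H = P0_divisors (f H)"
proof (intro set_eqI iffI)
  fix W assume "W \<in> f ` P0_divisors H"
  then obtain Y Z where "Y \<in> P0" "Z \<in> P0" "Y + Z = H" "W = f Y"
    by (auto simp: P0_divisors_def)
  then show "W \<in> P0_divisors (f H)"
    unfolding P0_divisors_def using P0_automorphism_in_P0 P0_automorphism_plus by auto
next
  fix W assume "W \<in> P0_divisors (f H)"
  then obtain V where W: "W \<in> P0" "V \<in> P0" "W + V = f H" by (auto simp: P0_divisors_def)
  have "f ` P0 = P0" using f by (simp add: P0_automorphism_def bij_betw_def)
  then obtain Y Z where Y: "Y \<in> P0" "W = f Y" and Z: "Z \<in> P0" "V = f Z"
    using W by (metis imageE)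
  have "f (Y + Z) = f H" using W Y Z by (simp add: P0_automorphism_plus)
  then have "Y + Z = H" using Y Z assms by (simp add: P0_automorphism_eq_iff P0_plus)
  then show "W \<in> f ` P0_divisors H" using Y Z by (auto simp: P0_divisors_def)
qed

lemma P0_automorphism_card_idempotent:
  assumes "finite (UNIV :: 'a set)" "0 \<in> H" "H + H = H"
  shows "card (f H) = card H"
proof -
  have H: "H \<in> P0" using assms by (simp add: P0_def)
  then have fH: "0 \<in> f H" "f H + f H = f H"
    using P0_automorphism_in_P0 P0_automorphism_plus[OF H H] assms by (auto simp: P0_def)
  have "inj_on f (P0_divisors H)"
    using f by (auto simp: P0_automorphism_def bij_betw_def P0_divisors_def intro: inj_on_subset)
  then have "card (P0_divisors (f H)) = card (P0_divisors H)"
    by (metis P0_automorphism_image_divisors[OF H] card_image)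
  then have "(2::nat) ^ (card (f H) - 1) = 2 ^ (card H - 1)"
    by (simp add: P0_divisors_idempotent card_subsets_containing_zero assms fH
        finite_subset[OF subset_UNIV])
  moreover have "card H \<noteq> 0" "card (f H) \<noteq> 0"
    using assms fH by (auto simp: finite_subset[OF subset_UNIV])
  ultimately show ?thesis by simp
qed

lemma P0_automorphism_card_le_stable_sumset_iter:
  assumes fin: "finite (UNIV :: 'a set)" and X: "X \<in> P0" and "1 \<le> s"
    and not_stable: "\<forall>i<s. sumset_iter i X + X \<noteq> sumset_iter i X"
    and stable: "sumset_iter s X + X = sumset_iter s X"
  shows "card (f X) + (s - 1) \<le> card (sumset_iter s X)"
proof -
  have "f X \<in> P0" using X by (rule P0_automorphism_in_P0)
  then have "card (sumset_iter 1 (f X)) + (s - 1) \<le> card (sumset_iter s (f X))"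
    using card_sumset_iter_growth[of "f X" s 1] not_stable \<open>1 \<le> s\<close> X
    by (simp add: P0_automorphism_sumset_iter_stable_iff P0_def finite_subset[OF subset_UNIV fin])
  moreover have "card (f (sumset_iter s X)) = card (sumset_iter s X)"
    using fin X sumset_iter_plus_stable[OF stable]
    by (intro P0_automorphism_card_idempotent) (simp_all add: P0_def zero_in_sumset_iter)
  ultimately show ?thesis using X by (simp add: P0_automorphism_sumset_iter)
qed

lemma P0_automorphism_two_le_card:
  assumes fin: "finite (UNIV :: 'a set)" and X: "X \<in> P0" "X \<noteq> {0}"
  shows "2 \<le> card (f X)"
proof -
  have "f X \<noteq> f {0}" using X by (simp add: P0_automorphism_eq_iff P0_def)
  moreover have "0 \<in> f X" using P0_automorphism_in_P0[OF X(1)] by (simp add: P0_def)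
  ultimately obtain b where "b \<in> f X" "b \<noteq> 0" by (auto simp: P0_automorphism_zero)
  then have "card {0, b} \<le> card (f X)"
    using \<open>0 \<in> f X\<close> by (intro card_mono finite_subset[OF subset_UNIV fin]) auto
  then show ?thesis using \<open>b \<noteq> 0\<close> by simp
qed

end

theorem lemma2p3:
  fixes f :: "('a::{ab_group_add, finite}) set \<Rightarrow> 'a set"
  assumes "P0_automorphism f"
    and "X \<in> P0"
    and "card X = 2"
  shows "card (f X) = 2"
proof -
  obtain x y where xy: "X = {x, y}" "x \<noteq> y"
    using card_2_iff[THEN iffD1, OF assms(3)] by (elim exE conjE)
  have "0 \<in> X" using assms(2) by (simp add: P0_def)
  then obtain a where X: "X = {0, a}" "a \<noteq> 0"
    using xy by (metis insertE insert_commute singletonD)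
  obtain s where stable: "sumset_iter s X + X = sumset_iter s X"
    and not_stable: "\<forall>i<s. sumset_iter i X + X \<noteq> sumset_iter i X"
    using sumset_iter_stabilizes[OF \<open>0 \<in> X\<close>] .
  have "s \<noteq> 0"
  proof
    assume "s = 0"
    with stable X show False by simp
  qed
  then have "card (f X) + (s - 1) \<le> Suc s"
    using P0_automorphism_card_le_stable_sumset_iter[OF assms(1) _ assms(2) _ not_stable stable]
      card_sumset_iter_pair_le[of s a] X by simp
  moreover have "2 \<le> card (f X)"
    using P0_automorphism_two_le_card[OF assms(1) _ assms(2)] X by auto
  ultimately show ?thesis using \<open>s \<noteq> 0\<close> by simp
qed

end
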